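(* Let $I$ be a square-free monomial ideal of $S=K[x_1,\ldots,x_n]$ with minimal generating set $G(I)=\bigcup_{i=1}^kG_{d_i}$, where $G_{d_i}$ consists of the generators of degree $d_i$. Then $I$ is an $f$-ideal if and only if: (1) for each positive $l\in\{d_1,\ldots,d_k\}$, $$|G_l|=\tfrac12\Big(C_n^l-\Big|\bigcup_{d_i>l}\sqcap^{d_i-l}(G_{d_i})\Big|-\Big|\bigcup_{d_i<l}\sqcup^{l-d_i}(G_{d_i})\Big|\Big);$$ and (2) for each positive integer $l\notin\{d_1,\ldots,d_k\}$, $$\bigcup_{d_i>l}\sqcap^{d_i-l}(G_{d_i})=sm(S)_l\setminus\bigcup_{d_i<l}\sqcup^{l-d_i}(G_{d_i}).$$
   Context: $K$ is a field; $C_n^l$ is the binomial coefficient; $sm(S)_l$ is the set of square-free monomials of degree $l$. For a set $A$ of square-free monomials, $\sqcup(A)=\{gx_i\mid g\in A,\ x_i\nmid g,\ 1\le i\le n\}$ and $\sqcap(A)=\{h\ne1\mid h=g/x_i \text{ for some } g\in A,\ x_i\mid g\}$; $\sqcup^m$ and $\sqcap^m$ denote $m$-fold iterates. With $\sigma$ the bijection $x_{i_1}\cdots x_{i_k}\mapsto\{i_1,\ldots,i_k\}$, the facet complex $\delta_{\mathcal{F}}(I)$ has facets $\sigma(g)$, $g\in G(I)$, the Stanley–Reisner complex is $\delta_{\mathcal{N}}(I)=\{\sigma(g)\mid g\text{ square-free monomial},\ g\notin I\}$, and $I$ is an $f$-ideal if both complexes have the same $f$-vector. *)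

theory Defs
  imports Complex_Main
begin

text \<open>Square-free monomials of K[x_1,...,x_n] are identified (via the bijection sigma)
with subsets of {1..n}; divisibility becomes inclusion, degree becomes cardinality.
A square-free monomial ideal I is given by its minimal generating set G(I).\<close>

definition sqfree_min_gens :: "nat \<Rightarrow> nat set set \<Rightarrow> bool" where
  "sqfree_min_gens n G \<longleftrightarrow> G \<subseteq> Pow {1..n} \<and> (\<forall>g\<in>G. \<forall>h\<in>G. g \<subseteq> h \<longrightarrow> g = h)"

definition Gdeg :: "nat set set \<Rightarrow> nat \<Rightarrow> nat set set" where
  "Gdeg G l = {g \<in> G. card g = l}"

definition sm :: "nat \<Rightarrow> nat \<Rightarrow> nat set set" where
  "sm n l = {F. F \<subseteq> {1..n} \<and> card F = l}"

definition sqcup :: "nat \<Rightarrow> nat set set \<Rightarrow> nat set set" where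
  "sqcup n A = {insert i g | g i. g \<in> A \<and> i \<in> {1..n} \<and> i \<notin> g}"

definition sqcap :: "nat set set \<Rightarrow> nat set set" where
  "sqcap A = {g - {i} | g i. g \<in> A \<and> i \<in> g \<and> g - {i} \<noteq> {}}"

definition facet_complex :: "nat set set \<Rightarrow> nat set set" where
  "facet_complex G = {F. \<exists>g\<in>G. F \<subseteq> g}"

definition sr_complex :: "nat \<Rightarrow> nat set set \<Rightarrow> nat set set" where
  "sr_complex n G = {F. F \<subseteq> {1..n} \<and> \<not> (\<exists>g\<in>G. g \<subseteq> F)}"

text \<open>f-vector: f_i = number of faces of dimension i (cardinality i+1), i >= 0.\<close>
definition fvec :: "nat set set \<Rightarrow> nat \<Rightarrow> nat" where
  "fvec \<Delta> i = card {F \<in> \<Delta>. card F = i + 1}"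

definition f_ideal :: "nat \<Rightarrow> nat set set \<Rightarrow> bool" where
  "f_ideal n G \<longleftrightarrow> fvec (facet_complex G) = fvec (sr_complex n G)"

end

theory Submission
  imports Defs
begin

text \<open>Both complexes are graded by face size. The faces of size l of the facet complex are the
degree-l generators together with the proper l-subsets of generators, which is what the iterated
\<open>\<sqinter>\<close>-operations produce; the non-faces of size l of the Stanley-Reisner complex are the degree-l
generators together with the proper l-supersets of generators, produced by the iterated
\<open>\<squnion>\<close>-operations. Because the minimal generators form an antichain, these three families are
pairwise disjoint, so equality of the f-vectors in size l is exactly the counting identity (1).
When no generator has degree l, the lower shadow already lies in the complement of the upper one,
and equal cardinalities amount to the set equality (2).\<close>

definition lower_shadow :: "nat set set \<Rightarrow> nat \<Rightarrow> nat set set" where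
  "lower_shadow G l = {F. card F = l \<and> (\<exists>g\<in>G. F \<subset> g)}"

definition upper_shadow :: "nat \<Rightarrow> nat set set \<Rightarrow> nat \<Rightarrow> nat set set" where
  "upper_shadow n G l = {F. F \<subseteq> {1..n} \<and> card F = l \<and> (\<exists>g\<in>G. g \<subset> F)}"

lemma sqcap_funpow:
  assumes A: "\<forall>g\<in>A. finite g \<and> card g = d" and "k < d" \<comment> \<open>\<open>sqcap\<close> never yields the empty set\<close>
  shows "(sqcap ^^ k) A = {F. \<exists>g\<in>A. F \<subseteq> g \<and> card F = d - k}"
  using \<open>k < d\<close>
proof (induction k)
  case 0
  have "F = g" if "g \<in> A" "F \<subseteq> g" "card F = d" for F g
    using that A by (metis card_subset_eq)
  then show ?case
    using A by auto
next
  case (Suc k)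
  then have IH: "(sqcap ^^ k) A = {F. \<exists>g\<in>A. F \<subseteq> g \<and> card F = d - k}" by simp
  show ?case
  proof (rule set_eqI, rule iffI)
    fix F assume "F \<in> (sqcap ^^ Suc k) A"
    then obtain H i where H: "H \<in> (sqcap ^^ k) A" "i \<in> H" "F = H - {i}"
      by (auto simp: sqcap_def)
    then obtain g where g: "g \<in> A" "H \<subseteq> g" "card H = d - k" using IH by auto
    have "finite H" using g A finite_subset by blast
    then show "F \<in> {F. \<exists>g\<in>A. F \<subseteq> g \<and> card F = d - Suc k}" using H g by auto
  next
    fix F assume "F \<in> {F. \<exists>g\<in>A. F \<subseteq> g \<and> card F = d - Suc k}"
    then obtain g where g: "g \<in> A" "F \<subseteq> g" "card F = d - Suc k" by auto
    have "finite g" "card g = d" using g A by auto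
    then have "F \<noteq> g" using g Suc.prems by auto
    then obtain i where i: "i \<in> g" "i \<notin> F" using g by blast
    have "finite F" using \<open>finite g\<close> g finite_subset by blast
    then have "insert i F \<in> (sqcap ^^ k) A" using IH g i Suc.prems by auto
    moreover have "F \<noteq> {}" using g Suc.prems by auto
    ultimately show "F \<in> (sqcap ^^ Suc k) A" using i
      by (auto simp: sqcap_def intro!: exI[of _ "insert i F"] exI[of _ i])
  qed
qed

lemma sqcup_funpow:
  assumes A: "\<forall>g\<in>A. g \<subseteq> {1..n} \<and> card g = d"
  shows "(sqcup n ^^ k) A = {F. F \<subseteq> {1..n} \<and> (\<exists>g\<in>A. g \<subseteq> F) \<and> card F = d + k}"
proof (induction k)
  case 0
  have "F = g" if "g \<in> A" "g \<subseteq> F" "F \<subseteq> {1..n}" "card F = d" for F g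
    using that A by (metis card_subset_eq finite_atLeastAtMost finite_subset)
  then show ?case
    using A by auto
next
  case (Suc k)
  show ?case
  proof (rule set_eqI, rule iffI)
    fix F assume "F \<in> (sqcup n ^^ Suc k) A"
    then obtain H i where H: "H \<in> (sqcup n ^^ k) A" "i \<in> {1..n}" "i \<notin> H" "F = insert i H"
      by (auto simp: sqcup_def)
    then obtain g where g: "g \<in> A" "g \<subseteq> H" "card H = d + k" "H \<subseteq> {1..n}"
      using Suc.IH by auto
    have "finite H" using g finite_subset by blast
    then show "F \<in> {F. F \<subseteq> {1..n} \<and> (\<exists>g\<in>A. g \<subseteq> F) \<and> card F = d + Suc k}"
      using H g by auto
  next
    fix F assume "F \<in> {F. F \<subseteq> {1..n} \<and> (\<exists>g\<in>A. g \<subseteq> F) \<and> card F = d + Suc k}"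
    then obtain g where g: "g \<in> A" "g \<subseteq> F" "card F = d + Suc k" "F \<subseteq> {1..n}" by auto
    have "finite F" using g finite_subset by blast
    have "F \<noteq> g" using g A by auto
    then obtain i where i: "i \<in> F" "i \<notin> g" using g by blast
    then have "F - {i} \<in> (sqcup n ^^ k) A"
      using Suc.IH g \<open>finite F\<close> by auto
    moreover have "F = insert i (F - {i})" "i \<in> {1..n}" using i g by auto
    ultimately show "F \<in> (sqcup n ^^ Suc k) A"
      by (auto simp: sqcup_def intro!: exI[of _ "F - {i}"] exI[of _ i])
  qed
qed

lemma Union_sqcap_Gdeg_eq_lower_shadow:
  assumes fin: "\<forall>g\<in>G. finite g" and "l > 0"
  shows "(\<Union>d \<in> {d \<in> card ` G. d > l}. (sqcap ^^ (d - l)) (Gdeg G d)) = lower_shadow G l"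
proof -
  have sqcap_Gdeg: "(sqcap ^^ (d - l)) (Gdeg G d) = {F. \<exists>g\<in>Gdeg G d. F \<subseteq> g \<and> card F = l}"
    if "d > l" for d
    using sqcap_funpow[of "Gdeg G d" d "d - l"] fin \<open>l > 0\<close> that by (auto simp: Gdeg_def)
  show ?thesis
  proof (intro set_eqI iffI)
    fix F assume "F \<in> (\<Union>d \<in> {d \<in> card ` G. d > l}. (sqcap ^^ (d - l)) (Gdeg G d))"
    then obtain g where "g \<in> G" "F \<subseteq> g" "card F = l" "card g > l"
      using sqcap_Gdeg by (auto simp: Gdeg_def)
    then show "F \<in> lower_shadow G l"
      unfolding lower_shadow_def by auto
  next
    fix F assume "F \<in> lower_shadow G l"
    then obtain g where g: "g \<in> G" "F \<subset> g" "card F = l"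
      unfolding lower_shadow_def by auto
    then have "card g > l"
      using fin psubset_card_mono by blast
    then show "F \<in> (\<Union>d \<in> {d \<in> card ` G. d > l}. (sqcap ^^ (d - l)) (Gdeg G d))"
      using g sqcap_Gdeg by (auto simp: Gdeg_def)
  qed
qed

lemma Union_sqcup_Gdeg_eq_upper_shadow:
  assumes "G \<subseteq> Pow {1..n}"
  shows "(\<Union>d \<in> {d \<in> card ` G. d < l}. (sqcup n ^^ (l - d)) (Gdeg G d)) = upper_shadow n G l"
proof -
  have sqcup_Gdeg: "(sqcup n ^^ (l - d)) (Gdeg G d)
      = {F. F \<subseteq> {1..n} \<and> (\<exists>g\<in>Gdeg G d. g \<subseteq> F) \<and> card F = l}"
    if "d < l" for d
    using sqcup_funpow[of "Gdeg G d" n d "l - d"] assms that by (auto simp: Gdeg_def)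
  show ?thesis
  proof (intro set_eqI iffI)
    fix F assume "F \<in> (\<Union>d \<in> {d \<in> card ` G. d < l}. (sqcup n ^^ (l - d)) (Gdeg G d))"
    then obtain g where "g \<in> G" "g \<subseteq> F" "F \<subseteq> {1..n}" "card F = l" "card g < l"
      using sqcup_Gdeg by (auto simp: Gdeg_def)
    then show "F \<in> upper_shadow n G l"
      unfolding upper_shadow_def by auto
  next
    fix F assume "F \<in> upper_shadow n G l"
    then obtain g where g: "g \<in> G" "g \<subset> F" "F \<subseteq> {1..n}" "card F = l"
      unfolding upper_shadow_def by auto
    then have "card g < l"
      by (metis psubset_card_mono finite_subset finite_atLeastAtMost)
    then show "F \<in> (\<Union>d \<in> {d \<in> card ` G. d < l}. (sqcup n ^^ (l - d)) (Gdeg G d))"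
      using g sqcup_Gdeg by (auto simp: Gdeg_def)
  qed
qed

lemma facet_complex_layer:
  "{F \<in> facet_complex G. card F = l} = Gdeg G l \<union> lower_shadow G l"
  unfolding facet_complex_def Gdeg_def lower_shadow_def by blast

lemma sr_complex_layer:
  "{F \<in> sr_complex n G. card F = l} = sm n l - (Gdeg G l \<union> upper_shadow n G l)"
  unfolding sr_complex_def Gdeg_def sm_def upper_shadow_def by blast

lemma f_ideal_iff_card_layers:
  "f_ideal n G \<longleftrightarrow>
     (\<forall>l>0. card {F \<in> facet_complex G. card F = l} = card {F \<in> sr_complex n G. card F = l})"
proof -
  have "(\<forall>i. P (i + 1)) \<longleftrightarrow> (\<forall>l>0. P l)" for P :: "nat \<Rightarrow> bool"
    by (auto simp: gr0_conv_Suc)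
  then show ?thesis
    unfolding f_ideal_def fvec_def fun_eq_iff .
qed

context
  fixes n :: nat and G :: "nat set set"
  assumes gens: "sqfree_min_gens n G"
begin

lemma gens_subset_Pow: "G \<subseteq> Pow {1..n}"
  using gens unfolding sqfree_min_gens_def by blast

lemma gens_antichain: "\<lbrakk>g \<in> G; h \<in> G; g \<subseteq> h\<rbrakk> \<Longrightarrow> g = h"
  using gens unfolding sqfree_min_gens_def by blast

lemma layers_subset_sm:
  "Gdeg G l \<subseteq> sm n l" "lower_shadow G l \<subseteq> sm n l" "upper_shadow n G l \<subseteq> sm n l"
  using gens_subset_Pow unfolding Gdeg_def lower_shadow_def upper_shadow_def sm_def by auto

lemma finite_layers:
  "finite (Gdeg G l)" "finite (lower_shadow G l)" "finite (upper_shadow n G l)"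
  using layers_subset_sm finite_subset[of _ "sm n l"] unfolding sm_def by auto

lemma layers_disjoint:
  "Gdeg G l \<inter> lower_shadow G l = {}" "Gdeg G l \<inter> upper_shadow n G l = {}"
  "lower_shadow G l \<inter> upper_shadow n G l = {}"
  using gens_antichain unfolding Gdeg_def lower_shadow_def upper_shadow_def
  by (blast dest: psubset_imp_subset psubset_trans)+

lemma card_facet_complex_layer:
  "card {F \<in> facet_complex G. card F = l} = card (Gdeg G l) + card (lower_shadow G l)"
  unfolding facet_complex_layer using finite_layers layers_disjoint by (simp add: card_Un_disjoint)

lemma card_sr_complex_layer:
  "card {F \<in> sr_complex n G. card F = l} + card (Gdeg G l) + card (upper_shadow n G l) = n choose l"
proof -
  let ?X = "Gdeg G l \<union> upper_shadow n G l"
  have "?X \<subseteq> sm n l" "finite (sm n l)"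
    using layers_subset_sm unfolding sm_def by auto
  then have "card (sm n l - ?X) + card ?X = card (sm n l)"
    by (metis card_Diff_subset card_mono finite_subset le_add_diff_inverse2)
  moreover have "card (sm n l) = n choose l"
    using n_subsets[of "{1..n}" l] unfolding sm_def by simp
  moreover have "card ?X = card (Gdeg G l) + card (upper_shadow n G l)"
    using finite_layers layers_disjoint by (simp add: card_Un_disjoint)
  ultimately show ?thesis
    unfolding sr_complex_layer by simp
qed

lemma layer_balance_iff:
  "card {F \<in> facet_complex G. card F = l} = card {F \<in> sr_complex n G. card F = l} \<longleftrightarrow>
   real (card (Gdeg G l)) = 1/2 * (real (n choose l)
     - real (card (lower_shadow G l)) - real (card (upper_shadow n G l)))"
proof -
  have choose_eq: "real (card {F \<in> sr_complex n G. card F = l}) + real (card (Gdeg G l))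
      + real (card (upper_shadow n G l)) = real (n choose l)"
    using arg_cong[OF card_sr_complex_layer[of l], of real] by simp
  have "card (Gdeg G l) + card (lower_shadow G l) = card {F \<in> sr_complex n G. card F = l}
      \<longleftrightarrow> real (card (Gdeg G l)) + real (card (lower_shadow G l))
        = real (card {F \<in> sr_complex n G. card F = l})"
    by (simp only: of_nat_add[symmetric] of_nat_eq_iff)
  also have "\<dots> \<longleftrightarrow> real (card (Gdeg G l)) = 1/2 * (real (n choose l)
     - real (card (lower_shadow G l)) - real (card (upper_shadow n G l)))"
    using choose_eq by (auto simp: field_simps)
  finally show ?thesis
    unfolding card_facet_complex_layer .
qed

lemma layer_balance_iff_without_generators:
  assumes "l \<notin> card ` G"
  shows "card {F \<in> facet_complex G. card F = l} = card {F \<in> sr_complex n G. card F = l} \<longleftrightarrow>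
    lower_shadow G l = sm n l - upper_shadow n G l"
proof -
  have "Gdeg G l = {}"
    using assms unfolding Gdeg_def by blast
  then have "{F \<in> facet_complex G. card F = l} = lower_shadow G l"
    "{F \<in> sr_complex n G. card F = l} = sm n l - upper_shadow n G l"
    unfolding facet_complex_layer sr_complex_layer by simp_all
  moreover have "lower_shadow G l \<subseteq> sm n l - upper_shadow n G l"
    using layers_subset_sm layers_disjoint by blast
  moreover have "finite (sm n l - upper_shadow n G l)"
    unfolding sm_def by simp
  ultimately show ?thesis
    by (metis card_subset_eq)
qed

end

theorem proposition6p1:
  fixes n :: nat and G :: "nat set set"
  assumes "sqfree_min_gens n G"
  shows "f_ideal n G \<longleftrightarrow>
    ((\<forall>l \<in> card ` G. l > 0 \<longrightarrow>
        real (card (Gdeg G l)) = 1/2 * (real (n choose l)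
          - real (card (\<Union>d \<in> {d \<in> card ` G. d > l}. (sqcap ^^ (d - l)) (Gdeg G d)))
          - real (card (\<Union>d \<in> {d \<in> card ` G. d < l}. (sqcup n ^^ (l - d)) (Gdeg G d))))) \<and>
     (\<forall>l::nat. l > 0 \<and> l \<notin> card ` G \<longrightarrow>
        (\<Union>d \<in> {d \<in> card ` G. d > l}. (sqcap ^^ (d - l)) (Gdeg G d))
          = sm n l - (\<Union>d \<in> {d \<in> card ` G. d < l}. (sqcup n ^^ (l - d)) (Gdeg G d))))"
  (is "_ \<longleftrightarrow> ?rhs")
proof -
  have G_Pow: "G \<subseteq> Pow {1..n}"
    using gens_subset_Pow[OF assms] .
  then have G_finite: "\<forall>g\<in>G. finite g"
    using finite_subset by blast
  define balanced where "balanced l \<longleftrightarrow>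
    card {F \<in> facet_complex G. card F = l} = card {F \<in> sr_complex n G. card F = l}" for l
  have "f_ideal n G \<longleftrightarrow> (\<forall>l>0. balanced l)"
    unfolding f_ideal_iff_card_layers balanced_def ..
  also have "\<dots> \<longleftrightarrow> (\<forall>l \<in> card ` G. l > 0 \<longrightarrow> balanced l) \<and>
      (\<forall>l. l > 0 \<and> l \<notin> card ` G \<longrightarrow> balanced l)"
    by blast
  also have "\<dots> \<longleftrightarrow> (\<forall>l \<in> card ` G. l > 0 \<longrightarrow>
        real (card (Gdeg G l)) = 1/2 * (real (n choose l)
          - real (card (lower_shadow G l)) - real (card (upper_shadow n G l)))) \<and>
      (\<forall>l. l > 0 \<and> l \<notin> card ` G \<longrightarrow> lower_shadow G l = sm n l - upper_shadow n G l)"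
    unfolding balanced_def
    using layer_balance_iff[OF assms] layer_balance_iff_without_generators[OF assms] by auto
  also have "\<dots> \<longleftrightarrow> ?rhs"
    by (simp add: Union_sqcap_Gdeg_eq_lower_shadow[OF G_finite]
        Union_sqcup_Gdeg_eq_upper_shadow[OF G_Pow])
  finally show ?thesis .
qed

end
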